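(* Let $Q\in S$ be nonzero and $\mathbf u\in\mathbb Z^n_{>0}$. The following are equivalent: (1) $Q$ is quasi-homogeneous with respect to $\mathbf u$, i.e. $Q\in(S^{\mathbf u})_d$ for some $d$; (2) for every $\mathbf v\in\mathbb Z^n$ such that $\mathbf u+\mathbf v=(k,\dots,k)$ for some $k\in\mathbb Z$, $D(Q)$ is a graded $S^{\mathbf u}$-submodule of $D^{(\mathbf u,\mathbf v)}$ (i.e. all homogeneous components of every element of $D(Q)$ belong to $D(Q)$).
   Context: $\mathbb K$ a field of characteristic zero, $S=\mathbb K[x_1,\dots,x_n]$, $D=\mathrm{Der}_{\mathbb K}(S)$ with basis $\partial_i=\partial/\partial x_i$. For $g\in S$, $e\ge1$: $D(g;e)=\{\delta\in D:\delta(g)\in g^eS\}$; for nonzero $f=cf_1^{e_1}\cdots f_r^{e_r}$ (pairwise non-associate irreducibles, $c\in\mathbb K^*$), $D(f)=\bigcap_iD(f_i;e_i)$. $S^{\mathbf u}$ is $S$ with grading $\deg x_i=u_i$; $D^{(\mathbf u,\mathbf v)}$ is $D$ graded by $\deg(a\partial_i)=\deg^{\mathbf u}(a)+v_i$ for $\mathbf u$-homogeneous $a$. *)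

theory Defs
  imports "HOL-Library.Poly_Mapping" "HOL-Computational_Algebra.Factorial_Ring"
begin

text \<open>Polynomial ring S = K[x_v | v in 'v] with a finite type 'v of variables
  (n = CARD('v)); monomials are exponent vectors 'v =>0 nat.\<close>

type_synonym ('v, 'k) mpoly = "('v \<Rightarrow>\<^sub>0 nat) \<Rightarrow>\<^sub>0 'k"

definition pdiff :: "'v \<Rightarrow> ('v, 'k::comm_ring_1) mpoly \<Rightarrow> ('v, 'k) mpoly" where
  "pdiff i p = (\<Sum>(m::'v \<Rightarrow>\<^sub>0 nat)\<in>Poly_Mapping.keys p.
      Poly_Mapping.single (m - Poly_Mapping.single i 1)
        (of_nat (Poly_Mapping.lookup m i) * Poly_Mapping.lookup p m))"

text \<open>A derivation of S is represented by its coefficient vector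
  (delta = sum_i a_i d_i, D being free on the basis d_i); its action on a polynomial.\<close>
type_synonym ('v, 'k) der = "'v \<Rightarrow> ('v, 'k) mpoly"

definition der_apply :: "('v::finite, 'k::comm_ring_1) der \<Rightarrow> ('v, 'k) mpoly \<Rightarrow> ('v, 'k) mpoly" where
  "der_apply \<delta> g = (\<Sum>i\<in>UNIV. \<delta> i * pdiff i g)"

definition Dge :: "('v::finite, 'k::comm_ring_1) mpoly \<Rightarrow> nat \<Rightarrow> ('v, 'k) der set" where
  "Dge g e = {\<delta>. g ^ e dvd der_apply \<delta> g}"

definition Dlog :: "('v::finite, 'k::comm_ring_1) mpoly \<Rightarrow> ('v, 'k) der set" where
  "Dlog f = {\<delta>. \<forall>g e. irreducible g \<and> g dvd f \<and> g ^ e dvd f \<and> \<not> g ^ Suc e dvd f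
                  \<longrightarrow> \<delta> \<in> Dge g e}"

definition wdeg :: "('v::finite \<Rightarrow> int) \<Rightarrow> ('v \<Rightarrow>\<^sub>0 nat) \<Rightarrow> int" where
  "wdeg u m = (\<Sum>i\<in>UNIV. u i * int (Poly_Mapping.lookup m i))"

definition whomog :: "('v::finite \<Rightarrow> int) \<Rightarrow> int \<Rightarrow> ('v, 'k::zero) mpoly \<Rightarrow> bool" where
  "whomog u d p \<longleftrightarrow> (\<forall>m\<in>Poly_Mapping.keys p. wdeg u m = d)"

definition hcomp :: "('v::finite \<Rightarrow> int) \<Rightarrow> int \<Rightarrow> ('v, 'k::comm_ring_1) mpoly \<Rightarrow> ('v, 'k) mpoly" where
  "hcomp u d p = (\<Sum>m\<in>{m\<in>Poly_Mapping.keys p. wdeg u m = d}. Poly_Mapping.single m (Poly_Mapping.lookup p m))"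

text \<open>Homogeneous component of degree d of a derivation in D^(u,v),
  where deg(a d_i) = deg^u(a) + v_i.\<close>
definition hcomp_der :: "('v::finite \<Rightarrow> int) \<Rightarrow> ('v \<Rightarrow> int) \<Rightarrow> int \<Rightarrow> ('v, 'k::comm_ring_1) der \<Rightarrow> ('v, 'k) der" where
  "hcomp_der u v d \<delta> = (\<lambda>i. hcomp u (d - v i) (\<delta> i))"

definition graded_der_set :: "('v::finite \<Rightarrow> int) \<Rightarrow> ('v \<Rightarrow> int) \<Rightarrow> ('v, 'k::comm_ring_1) der set \<Rightarrow> bool" where
  "graded_der_set u v M \<longleftrightarrow> (\<forall>\<delta>\<in>M. \<forall>d. hcomp_der u v d \<delta> \<in> M)"

end

theory Submission
  imports Defs
begin

text \<open>
  The proof rests on the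
  \<^emph>\<open>width\<close> of a nonzero polynomial: the difference between the largest and the smallest
  \<open>u\<close>-degree of its monomials.  Over a domain the top (bottom) degree of a product is the
  sum of the top (bottom) degrees, so the width is additive; hence divisors of a polynomial
  have smaller width, and divisors of a quasi-homogeneous polynomial are quasi-homogeneous.

  (1) \<open>\<Longrightarrow>\<close> (2): if \<open>u + v\<close> is constant, taking the degree-\<open>d\<close> component of a derivation
  \<open>\<delta>\<close> and applying it to a quasi-homogeneous \<open>g\<close> gives a homogeneous component of \<open>\<delta>(g)\<close>;
  homogeneous components of multiples of \<open>g\<^sup>e\<close> are again multiples of \<open>g\<^sup>e\<close>.  As all
  irreducible factors of a quasi-homogeneous \<open>Q\<close> are quasi-homogeneous, \<open>D(Q)\<close> is graded.

  (2) \<open>\<Longrightarrow>\<close> (1): take \<open>v = -u\<close>.  If \<open>Q\<close> is not quasi-homogeneous it has an irreducible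
  factor \<open>g\<close> of positive width.  The derivation \<open>Q\<cdot>E\<close>, with \<open>E = \<Sum> u\<^sub>i x\<^sub>i \<partial>\<^sub>i\<close> the Euler
  derivation, lies in \<open>D(Q)\<close>; its top component is \<open>Q\<^sub>t\<^sub>o\<^sub>p \<cdot> E\<close>.  Gradedness gives
  \<open>g | Q\<^sub>t\<^sub>o\<^sub>p \<cdot> (E(g) - T g)\<close> with \<open>T\<close> the top degree of \<open>g\<close>, but in characteristic zero
  the right-hand side is nonzero of width smaller than that of \<open>g\<close>: a contradiction.
\<close>

section \<open>Polynomial multiplication without zero divisors\<close>

lemma lookup_mult_unique_decomp:
  fixes f g :: "'a::monoid_add \<Rightarrow>\<^sub>0 'k::semiring_0"
  assumes unique: "\<And>a b. a \<in> Poly_Mapping.keys f \<Longrightarrow> b \<in> Poly_Mapping.keys g \<Longrightarrow>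
                      a + b = a0 + b0 \<Longrightarrow> a = a0 \<and> b = b0"
  shows "Poly_Mapping.lookup (f * g) (a0 + b0) = Poly_Mapping.lookup f a0 * Poly_Mapping.lookup g b0"
proof -
  let ?f = "Poly_Mapping.lookup f" and ?g = "Poly_Mapping.lookup g"
  have "Poly_Mapping.lookup (f * g) (a0 + b0) = (\<Sum>(a, b). ?f a * ?g b when a0 + b0 = a + b)"
    by (simp add: times_poly_mapping.rep_eq prod_fun_unfold_prod)
  also have "\<dots> = (\<Sum>(a, b). ?f a * ?g b when (a0, b0) = (a, b))"
  proof (rule Sum_any.cong)
    fix ab :: "'a \<times> 'a"
    obtain a b where [simp]: "ab = (a, b)" by (cases ab)
    show "(case ab of (a, b) \<Rightarrow> ?f a * ?g b when a0 + b0 = a + b) =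
          (case ab of (a, b) \<Rightarrow> ?f a * ?g b when (a0, b0) = (a, b))"
      using unique[of a b] by (auto simp: when_def in_keys_iff) (metis mult_not_zero)+
  qed
  also have "\<dots> = (\<Sum>ab. (case ab of (a, b) \<Rightarrow> ?f a * ?g b) when (a0, b0) = ab)"
    unfolding split_def when_def by auto
  also have "\<dots> = ?f a0 * ?g b0" by simp
  finally show ?thesis .
qed

text \<open>Exponent monoids that embed into a linearly ordered cancellative monoid give product rings
  without zero divisors: the product of the maximal exponents occurs exactly once.\<close>
lemma mult_nonzero_if_ordered_embedding:
  fixes f g :: "'a::monoid_add \<Rightarrow>\<^sub>0 'k::semiring_no_zero_divisors"
    and \<mu> :: "'a \<Rightarrow> 'b::{ordered_cancel_comm_monoid_add, linorder}"
  assumes "inj \<mu>" and \<mu>_add: "\<And>a b. \<mu> (a + b) = \<mu> a + \<mu> b"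
    and "f \<noteq> 0" "g \<noteq> 0"
  shows "f * g \<noteq> 0"
proof -
  have max_key: "\<exists>a0\<in>Poly_Mapping.keys h. \<forall>a\<in>Poly_Mapping.keys h. \<mu> a \<le> \<mu> a0"
    if "h \<noteq> 0" for h :: "'a \<Rightarrow>\<^sub>0 'k"
  proof -
    have "Max (\<mu> ` Poly_Mapping.keys h) \<in> \<mu> ` Poly_Mapping.keys h"
      using that by (intro Max_in) auto
    then obtain a0 where "a0 \<in> Poly_Mapping.keys h" "\<mu> a0 = Max (\<mu> ` Poly_Mapping.keys h)"
      by auto
    then show ?thesis by (metis Max_ge finite_imageI finite_keys imageI)
  qed
  obtain a0 where a0: "a0 \<in> Poly_Mapping.keys f" "\<And>a. a \<in> Poly_Mapping.keys f \<Longrightarrow> \<mu> a \<le> \<mu> a0"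
    using max_key[OF \<open>f \<noteq> 0\<close>] by blast
  obtain b0 where b0: "b0 \<in> Poly_Mapping.keys g" "\<And>b. b \<in> Poly_Mapping.keys g \<Longrightarrow> \<mu> b \<le> \<mu> b0"
    using max_key[OF \<open>g \<noteq> 0\<close>] by blast
  have "a = a0 \<and> b = b0"
    if ab: "a \<in> Poly_Mapping.keys f" "b \<in> Poly_Mapping.keys g" "a + b = a0 + b0" for a b
  proof -
    have sum_eq: "\<mu> a + \<mu> b = \<mu> a0 + \<mu> b0" using ab(3) by (metis \<mu>_add)
    have le: "\<mu> a \<le> \<mu> a0" "\<mu> b \<le> \<mu> b0" using a0 b0 ab by auto
    have "\<mu> a = \<mu> a0"
      using add_less_le_mono[of "\<mu> a" "\<mu> a0" "\<mu> b" "\<mu> b0"] le sum_eq by force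
    then have "\<mu> b = \<mu> b0" using sum_eq by simp
    then show ?thesis using \<open>\<mu> a = \<mu> a0\<close> \<open>inj \<mu>\<close> by (auto dest: injD)
  qed
  then have "Poly_Mapping.lookup (f * g) (a0 + b0) = Poly_Mapping.lookup f a0 * Poly_Mapping.lookup g b0"
    by (rule lookup_mult_unique_decomp)
  also have "\<dots> \<noteq> 0" using a0(1) b0(1) by (simp add: in_keys_iff)
  finally show ?thesis by auto
qed

text \<open>The library only provides this for linearly ordered variable types; for a finite type of
  variables, exponent vectors embed into \<open>nat \<Rightarrow>\<^sub>0 nat\<close> along any injection into \<open>nat\<close>.\<close>
lemma mpoly_mult_nonzero:
  fixes f g :: "('v::finite, 'k::semiring_no_zero_divisors) mpoly"
  assumes "f \<noteq> 0" "g \<noteq> 0"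
  shows "f * g \<noteq> 0"
proof -
  obtain \<iota> :: "'v \<Rightarrow> nat" where "inj \<iota>"
    using finite_imp_inj_to_nat_seg[of "UNIV :: 'v set"] by auto
  define \<mu> :: "('v \<Rightarrow>\<^sub>0 nat) \<Rightarrow> (nat \<Rightarrow>\<^sub>0 nat)" where
    "\<mu> m = (\<Sum>v\<in>UNIV. Poly_Mapping.single (\<iota> v) (Poly_Mapping.lookup m v))" for m
  have "Poly_Mapping.lookup (\<mu> m) (\<iota> w) = Poly_Mapping.lookup m w" for m w
  proof -
    have "Poly_Mapping.lookup (\<mu> m) (\<iota> w) = (\<Sum>v\<in>UNIV. if v = w then Poly_Mapping.lookup m v else 0)"
      unfolding \<mu>_def lookup_sum
      by (rule sum.cong) (auto simp: lookup_single when_def \<open>inj \<iota>\<close> inj_eq)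
    then show ?thesis by simp
  qed
  then have "inj \<mu>" by (metis injI poly_mapping_eqI)
  moreover have "\<mu> (a + b) = \<mu> a + \<mu> b" for a b
    by (simp add: \<mu>_def lookup_add single_add sum.distrib)
  ultimately show ?thesis by (rule mult_nonzero_if_ordered_embedding[OF _ _ assms])
qed

section \<open>Homogeneous components\<close>

lemma lookup_hcomp:
  "Poly_Mapping.lookup (hcomp u d p) m = (if wdeg u m = d then Poly_Mapping.lookup p m else 0)"
proof -
  have "Poly_Mapping.lookup (hcomp u d p) m =
      (\<Sum>m'\<in>{m'\<in>Poly_Mapping.keys p. wdeg u m' = d}. if m' = m then Poly_Mapping.lookup p m' else 0)"
    by (simp add: hcomp_def lookup_sum lookup_single when_def)
  also have "\<dots> = (if wdeg u m = d then Poly_Mapping.lookup p m else 0)"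
    by (auto simp: in_keys_iff)
  finally show ?thesis .
qed

lemma hcomp_add: "hcomp u d (p + q) = hcomp u d p + hcomp u d q"
  by (rule poly_mapping_eqI) (simp add: lookup_hcomp lookup_add)

lemma hcomp_zero [simp]: "hcomp u d 0 = 0"
  by (simp add: hcomp_def)

lemma hcomp_sum: "hcomp u d (sum f A) = (\<Sum>a\<in>A. hcomp u d (f a))"
  by (induction A rule: infinite_finite_induct) (auto simp: hcomp_add)

lemma hcomp_decomp:
  assumes "finite S" "wdeg u ` Poly_Mapping.keys p \<subseteq> S"
  shows "p = (\<Sum>b\<in>S. hcomp u b p)"
proof (rule poly_mapping_eqI)
  fix m
  have "Poly_Mapping.lookup (\<Sum>b\<in>S. hcomp u b p) m =
      (\<Sum>b\<in>S. if wdeg u m = b then Poly_Mapping.lookup p m else 0)"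
    by (simp add: lookup_sum lookup_hcomp)
  also have "\<dots> = (if wdeg u m \<in> S then Poly_Mapping.lookup p m else 0)"
    using assms(1) by (simp add: sum.delta')
  also have "\<dots> = Poly_Mapping.lookup p m"
    using assms(2) by (force simp: in_keys_iff image_subset_iff)
  finally show "Poly_Mapping.lookup p m = Poly_Mapping.lookup (\<Sum>b\<in>S. hcomp u b p) m" ..
qed

lemma hcomp_ne_zero_iff: "hcomp u c p \<noteq> 0 \<longleftrightarrow> c \<in> wdeg u ` Poly_Mapping.keys p"
proof
  assume "hcomp u c p \<noteq> 0"
  then obtain m where "Poly_Mapping.lookup (hcomp u c p) m \<noteq> 0"
    by (metis lookup_zero poly_mapping_eqI)
  then show "c \<in> wdeg u ` Poly_Mapping.keys p"
    by (auto simp: lookup_hcomp in_keys_iff split: if_splits)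
next
  assume "c \<in> wdeg u ` Poly_Mapping.keys p"
  then obtain m where "m \<in> Poly_Mapping.keys p" "wdeg u m = c" by auto
  then have "Poly_Mapping.lookup (hcomp u c p) m \<noteq> 0" by (simp add: lookup_hcomp in_keys_iff)
  then show "hcomp u c p \<noteq> 0" by auto
qed

section \<open>Weighted degree and quasi-homogeneous polynomials\<close>

lemma wdeg_add: "wdeg u (m + n) = wdeg u m + wdeg u n"
  by (simp add: wdeg_def lookup_add algebra_simps sum.distrib)

lemma wdeg_zero [simp]: "wdeg u 0 = 0"
  by (simp add: wdeg_def)

lemma wdeg_single [simp]: "wdeg u (Poly_Mapping.single i n) = u i * int n"
proof -
  have "wdeg u (Poly_Mapping.single i n) = (\<Sum>j\<in>UNIV. if j = i then u i * int n else 0)"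
    unfolding wdeg_def by (rule sum.cong) (auto simp: lookup_single when_def)
  then show ?thesis by simp
qed

lemma wdeg_uminus: "wdeg (\<lambda>i. - u i) m = - wdeg u m"
  by (simp add: wdeg_def sum_negf)

lemma wdeg_nonpos_imp_zero:
  assumes u: "\<forall>i. u i > 0" and "wdeg u m \<le> 0"
  shows "m = 0"
proof (rule poly_mapping_eqI)
  fix i
  have nonneg: "0 \<le> u j * int (Poly_Mapping.lookup m j)" for j
    using u by (simp add: less_imp_le)
  then have "\<forall>j\<in>UNIV. u j * int (Poly_Mapping.lookup m j) = 0"
    using assms(2) sum_nonneg_eq_0_iff[of UNIV "\<lambda>j. u j * int (Poly_Mapping.lookup m j)"]
    by (simp add: wdeg_def antisym sum_nonneg)
  then have "u i * int (Poly_Mapping.lookup m i) = 0" by blast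
  moreover have "u i \<noteq> 0" using u by (metis order.irrefl)
  ultimately show "Poly_Mapping.lookup m i = Poly_Mapping.lookup 0 i" by simp
qed

lemma whomog_iff: "whomog u d p \<longleftrightarrow> (\<forall>m. Poly_Mapping.lookup p m \<noteq> 0 \<longrightarrow> wdeg u m = d)"
  by (auto simp: whomog_def in_keys_iff)

lemma whomog_hcomp: "whomog u d (hcomp u d p)"
  by (simp add: whomog_iff lookup_hcomp)

lemma hcomp_whomog: "whomog u a p \<Longrightarrow> hcomp u c p = (if c = a then p else 0)"
  by (rule poly_mapping_eqI) (auto simp: lookup_hcomp whomog_iff)

lemma whomog_single: "whomog u (wdeg u m) (Poly_Mapping.single m c)"
  by (auto simp: whomog_iff lookup_single when_def)

lemma whomog_one: "whomog u 0 1"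
  by (simp add: whomog_def)

lemma whomog_mult: "whomog u a p \<Longrightarrow> whomog u b q \<Longrightarrow> whomog u (a + b) (p * q)"
  unfolding whomog_def using keys_mult[of p q] by (auto simp: wdeg_add)

lemma whomog_power: "whomog u a p \<Longrightarrow> whomog u (int n * a) (p ^ n)"
  by (induction n) (auto simp: whomog_one algebra_simps dest: whomog_mult)

lemma hcomp_mult_whomog:
  fixes p q :: "('v::finite, 'k::comm_ring_1) mpoly"
  assumes "whomog u a p"
  shows "hcomp u c (p * q) = p * hcomp u (c - a) q"
proof -
  define S where "S = wdeg u ` Poly_Mapping.keys q"
  have "finite S" by (simp add: S_def)
  have "p * q = (\<Sum>b\<in>S. p * hcomp u b q)"
    using hcomp_decomp[OF \<open>finite S\<close>, of u q] by (simp add: S_def flip: sum_distrib_left)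
  then have "hcomp u c (p * q) = (\<Sum>b\<in>S. hcomp u c (p * hcomp u b q))"
    by (simp add: hcomp_sum)
  also have "\<dots> = (\<Sum>b\<in>S. if b = c - a then p * hcomp u b q else 0)"
  proof (rule sum.cong)
    fix b
    have "whomog u (a + b) (p * hcomp u b q)" using assms whomog_hcomp whomog_mult by blast
    then show "hcomp u c (p * hcomp u b q) = (if b = c - a then p * hcomp u b q else 0)"
      by (auto simp: hcomp_whomog)
  qed simp
  also have "\<dots> = p * hcomp u (c - a) q"
    using \<open>finite S\<close> hcomp_ne_zero_iff[of u "c - a" q] by (auto simp: sum.delta' S_def)
  finally show ?thesis .
qed

lemma hcomp_mult:
  fixes p q :: "('v::finite, 'k::comm_ring_1) mpoly"
  shows "hcomp u c (p * q) = (\<Sum>x\<in>wdeg u ` Poly_Mapping.keys p. hcomp u x p * hcomp u (c - x) q)"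
proof -
  have "p * q = (\<Sum>x\<in>wdeg u ` Poly_Mapping.keys p. hcomp u x p * q)"
    using hcomp_decomp[of "wdeg u ` Poly_Mapping.keys p" u p] by (simp flip: sum_distrib_right)
  then show ?thesis
    by (simp add: hcomp_sum hcomp_mult_whomog[OF whomog_hcomp])
qed

section \<open>Top degree, bottom degree and width\<close>

text \<open>These are
  meaningful for \<open>p \<noteq> 0\<close>; a nonzero \<open>p\<close> is quasi-homogeneous iff its width is \<open>0\<close>.\<close>
definition top_deg :: "('v::finite \<Rightarrow> int) \<Rightarrow> ('v, 'k::zero) mpoly \<Rightarrow> int" where
  "top_deg u p = Max (wdeg u ` Poly_Mapping.keys p)"

definition bot_deg :: "('v::finite \<Rightarrow> int) \<Rightarrow> ('v, 'k::zero) mpoly \<Rightarrow> int" where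
  "bot_deg u p = Min (wdeg u ` Poly_Mapping.keys p)"

definition width :: "('v::finite \<Rightarrow> int) \<Rightarrow> ('v, 'k::zero) mpoly \<Rightarrow> int" where
  "width u p = top_deg u p - bot_deg u p"

lemma top_deg_ge: "c \<in> wdeg u ` Poly_Mapping.keys p \<Longrightarrow> c \<le> top_deg u p"
  by (simp add: top_deg_def)

lemma bot_deg_le: "c \<in> wdeg u ` Poly_Mapping.keys p \<Longrightarrow> bot_deg u p \<le> c"
  by (simp add: bot_deg_def)

lemma top_deg_in: "p \<noteq> 0 \<Longrightarrow> top_deg u p \<in> wdeg u ` Poly_Mapping.keys p"
  unfolding top_deg_def by (rule Max_in) auto

lemma bot_deg_in: "p \<noteq> 0 \<Longrightarrow> bot_deg u p \<in> wdeg u ` Poly_Mapping.keys p"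
  unfolding bot_deg_def by (rule Min_in) auto

lemma width_nonneg: "p \<noteq> 0 \<Longrightarrow> 0 \<le> width u p"
  unfolding width_def using bot_deg_le[OF top_deg_in] by simp

text \<open>Bottom degrees are top degrees for the negated weights; this transfers results.\<close>
lemma bot_deg_uminus:
  assumes "p \<noteq> 0"
  shows "bot_deg u p = - top_deg (\<lambda>i. - u i) p"
proof -
  have "top_deg (\<lambda>i. - u i) p = - bot_deg u p"
    unfolding top_deg_def
  proof (rule Max_eqI)
    show "y \<le> - bot_deg u p" if "y \<in> wdeg (\<lambda>i. - u i) ` Poly_Mapping.keys p" for y
      using that bot_deg_le[of _ u p] by (auto simp: wdeg_uminus)
    show "- bot_deg u p \<in> wdeg (\<lambda>i. - u i) ` Poly_Mapping.keys p"
      using bot_deg_in[OF assms, of u] by (auto simp: wdeg_uminus)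
  qed simp
  then show ?thesis by simp
qed

lemma hcomp_mult_above_top:
  fixes p q :: "('v::finite, 'k::comm_ring_1) mpoly"
  assumes "c > top_deg u p + top_deg u q"
  shows "hcomp u c (p * q) = 0"
proof -
  have "hcomp u (c - x) q = 0" if "x \<in> wdeg u ` Poly_Mapping.keys p" for x
  proof -
    have "top_deg u q < c - x" using top_deg_ge[OF that] assms by linarith
    then have "c - x \<notin> wdeg u ` Poly_Mapping.keys q" using top_deg_ge[of "c - x" u q] by (meson not_less)
    then show ?thesis using hcomp_ne_zero_iff by blast
  qed
  then show ?thesis by (simp add: hcomp_mult)
qed

lemma hcomp_mult_top:
  fixes p q :: "('v::finite, 'k::comm_ring_1) mpoly"
  assumes "p \<noteq> 0"
  shows "hcomp u (top_deg u p + top_deg u q) (p * q) = hcomp u (top_deg u p) p * hcomp u (top_deg u q) q"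
proof -
  let ?a = "top_deg u p" and ?b = "top_deg u q"
  have "hcomp u x p * hcomp u (?a + ?b - x) q = (if x = ?a then hcomp u ?a p * hcomp u ?b q else 0)"
    if "x \<in> wdeg u ` Poly_Mapping.keys p" for x
  proof (cases "x = ?a")
    case False
    then have "?b < ?a + ?b - x" using top_deg_ge[OF that] by linarith
    then have "?a + ?b - x \<notin> wdeg u ` Poly_Mapping.keys q"
      using top_deg_ge[of "?a + ?b - x" u q] by (meson not_less)
    then show ?thesis using False hcomp_ne_zero_iff by (metis mult_zero_right)
  qed simp
  then have "hcomp u (?a + ?b) (p * q) =
      (\<Sum>x\<in>wdeg u ` Poly_Mapping.keys p. if x = ?a then hcomp u ?a p * hcomp u ?b q else 0)"
    unfolding hcomp_mult by (rule sum.cong[OF refl])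
  also have "\<dots> = hcomp u ?a p * hcomp u ?b q"
    using top_deg_in[OF assms] by (simp add: sum.delta')
  finally show ?thesis .
qed

lemma top_deg_mult:
  fixes p q :: "('v::finite, 'k::idom) mpoly"
  assumes "p \<noteq> 0" "q \<noteq> 0"
  shows "top_deg u (p * q) = top_deg u p + top_deg u q"
proof (rule antisym)
  have "hcomp u (top_deg u p) p \<noteq> 0" "hcomp u (top_deg u q) q \<noteq> 0"
    using assms top_deg_in hcomp_ne_zero_iff by blast+
  then have "hcomp u (top_deg u p + top_deg u q) (p * q) \<noteq> 0"
    by (simp add: hcomp_mult_top[OF assms(1)] mpoly_mult_nonzero)
  then show "top_deg u p + top_deg u q \<le> top_deg u (p * q)"
    using hcomp_ne_zero_iff top_deg_ge by blast
next
  have "hcomp u (top_deg u (p * q)) (p * q) \<noteq> 0"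
    using top_deg_in[OF mpoly_mult_nonzero[OF assms]] hcomp_ne_zero_iff by blast
  then show "top_deg u (p * q) \<le> top_deg u p + top_deg u q"
    using hcomp_mult_above_top by (metis not_le)
qed

lemma bot_deg_mult:
  fixes p q :: "('v::finite, 'k::idom) mpoly"
  assumes "p \<noteq> 0" "q \<noteq> 0"
  shows "bot_deg u (p * q) = bot_deg u p + bot_deg u q"
  using assms mpoly_mult_nonzero[OF assms] by (simp add: bot_deg_uminus top_deg_mult)

lemma width_mult:
  fixes p q :: "('v::finite, 'k::idom) mpoly"
  assumes "p \<noteq> 0" "q \<noteq> 0"
  shows "width u (p * q) = width u p + width u q"
  using assms by (simp add: width_def top_deg_mult bot_deg_mult)

lemma width_dvd:
  fixes g p :: "('v::finite, 'k::idom) mpoly"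
  assumes "g dvd p" "p \<noteq> 0"
  shows "width u g \<le> width u p"
proof -
  obtain b where p: "p = g * b" using assms(1) by (auto elim: dvdE)
  then have "g \<noteq> 0" "b \<noteq> 0" using assms(2) by auto
  then show ?thesis using p width_mult[of g b u] width_nonneg[of b u] by simp
qed

lemma whomog_iff_width_zero:
  assumes "p \<noteq> 0"
  shows "(\<exists>d. whomog u d p) \<longleftrightarrow> width u p = 0"
proof
  assume "\<exists>d. whomog u d p"
  then show "width u p = 0"
    using top_deg_in[OF assms, of u] bot_deg_in[OF assms, of u] by (auto simp: whomog_def width_def)
next
  assume "width u p = 0"
  have "wdeg u m = top_deg u p" if "m \<in> Poly_Mapping.keys p" for m
    using top_deg_ge[OF imageI[OF that], of u] bot_deg_le[OF imageI[OF that], of u] \<open>width u p = 0\<close>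
    by (simp add: width_def)
  then have "whomog u (top_deg u p) p" by (simp add: whomog_def)
  then show "\<exists>d. whomog u d p" ..
qed

lemma mpoly_power_nonzero:
  fixes g :: "('v::finite, 'k::idom) mpoly"
  shows "g \<noteq> 0 \<Longrightarrow> g ^ n \<noteq> 0"
  by (induction n) (auto simp: mpoly_mult_nonzero)

lemma width_one [simp]: "width u (1 :: ('v::finite, 'k::comm_ring_1) mpoly) = 0"
  by (metis whomog_iff_width_zero whomog_one one_neq_zero)

lemma width_power:
  fixes g :: "('v::finite, 'k::idom) mpoly"
  assumes "g \<noteq> 0"
  shows "width u (g ^ n) = int n * width u g"
proof (induction n)
  case (Suc n)
  have "g ^ n \<noteq> 0" using assms by (rule mpoly_power_nonzero)
  then show ?case using Suc assms by (simp add: width_mult algebra_simps)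
qed simp

lemma unit_width:
  fixes p :: "('v::finite, 'k::idom) mpoly"
  assumes "p dvd 1"
  shows "width u p = 0"
proof -
  obtain r where r: "1 = p * r" using assms by (auto elim: dvdE)
  then have "p \<noteq> 0" "r \<noteq> 0" by auto
  then show ?thesis using r width_mult[of p r u] width_nonneg[of p u] width_nonneg[of r u] by simp
qed

lemma top_deg_nonpos_imp_unit:
  fixes b :: "('v::finite, 'k::field) mpoly"
  assumes u: "\<forall>i. u i > 0" and b: "b \<noteq> 0" "top_deg u b \<le> 0"
  shows "b dvd 1"
proof -
  have keys: "m = 0" if "m \<in> Poly_Mapping.keys b" for m
    using wdeg_nonpos_imp_zero[OF u] top_deg_ge[OF imageI[OF that], of u] b(2) by simp
  define c where "c = Poly_Mapping.lookup b 0"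
  have bc: "b = Poly_Mapping.single 0 c"
    by (rule poly_mapping_eqI) (metis c_def keys in_keys_iff lookup_single_eq lookup_single_not_eq)
  then have "c \<noteq> 0" using b(1) by auto
  then have "b * Poly_Mapping.single 0 (inverse c) = 1"
    by (simp add: bc mult_single)
  then show ?thesis by (metis dvdI)
qed

section \<open>Derivations and the grading of \<open>D\<^bsup>(u,v)\<^esup>\<close>\<close>

lemma Dlog_dvd:
  assumes "\<delta> \<in> Dlog Q" "irreducible g" "g dvd Q" "g ^ e dvd Q" "\<not> g ^ Suc e dvd Q"
  shows "g ^ e dvd der_apply \<delta> g"
  using assms unfolding Dlog_def Dge_def by blast

lemma lookup_pdiff:
  fixes p :: "('v, 'k::comm_ring_1) mpoly"
  shows "Poly_Mapping.lookup (pdiff i p) m =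
    of_nat (Poly_Mapping.lookup m i + 1) * Poly_Mapping.lookup p (m + Poly_Mapping.single i 1)"
proof -
  let ?e = "Poly_Mapping.single i (1::nat)"
  have shift: "m' - ?e = m \<longleftrightarrow> m' = m + ?e" if "Poly_Mapping.lookup m' i \<noteq> 0" for m'
  proof
    assume "m' - ?e = m"
    then show "m' = m + ?e"
      by (intro poly_mapping_eqI) (use that in \<open>auto simp: lookup_add lookup_minus lookup_single when_def\<close>)
  next
    assume "m' = m + ?e"
    then show "m' - ?e = m"
      by (intro poly_mapping_eqI) (auto simp: lookup_add lookup_minus lookup_single when_def)
  qed
  have "Poly_Mapping.lookup (pdiff i p) m = (\<Sum>m'\<in>Poly_Mapping.keys p.
      if m' - ?e = m then of_nat (Poly_Mapping.lookup m' i) * Poly_Mapping.lookup p m' else 0)"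
    by (simp add: pdiff_def lookup_sum lookup_single when_def)
  also have "\<dots> = (\<Sum>m'\<in>Poly_Mapping.keys p.
      if m' = m + ?e then of_nat (Poly_Mapping.lookup m' i) * Poly_Mapping.lookup p m' else 0)"
  proof (rule sum.cong[OF refl])
    fix m' show "(if m' - ?e = m then of_nat (Poly_Mapping.lookup m' i) * Poly_Mapping.lookup p m' else 0) =
        (if m' = m + ?e then of_nat (Poly_Mapping.lookup m' i) * Poly_Mapping.lookup p m' else 0)"
      using shift[of m'] by (cases "Poly_Mapping.lookup m' i = 0") auto
  qed
  also have "\<dots> = of_nat (Poly_Mapping.lookup m i + 1) * Poly_Mapping.lookup p (m + ?e)"
    by (simp add: in_keys_iff lookup_add)
  finally show ?thesis .
qed

lemma hcomp_pdiff: "hcomp u c (pdiff i p) = pdiff i (hcomp u (c + u i) p)"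
  by (rule poly_mapping_eqI) (simp add: lookup_pdiff lookup_hcomp wdeg_add)

lemma whomog_pdiff: "whomog u a p \<Longrightarrow> whomog u (a - u i) (pdiff i p)"
  by (metis hcomp_pdiff hcomp_whomog diff_add_cancel whomog_hcomp)

lemma der_apply_hcomp_der:
  fixes g :: "('v::finite, 'k::comm_ring_1) mpoly"
  assumes g: "whomog u w g" and uv: "\<forall>i. u i + v i = k"
  shows "der_apply (hcomp_der u v d \<delta>) g = hcomp u (d - k + w) (der_apply \<delta> g)"
proof -
  have "hcomp u (d - k + w) (\<delta> i * pdiff i g) = hcomp u (d - v i) (\<delta> i) * pdiff i g" for i
  proof -
    have "hcomp u (d - k + w) (pdiff i g * \<delta> i) = pdiff i g * hcomp u (d - k + w - (w - u i)) (\<delta> i)"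
      by (rule hcomp_mult_whomog[OF whomog_pdiff[OF g]])
    moreover have "d - k + w - (w - u i) = d - v i" using uv[rule_format, of i] by simp
    ultimately show ?thesis by (simp add: mult.commute)
  qed
  then show ?thesis by (simp add: der_apply_def hcomp_der_def hcomp_sum)
qed

lemma dvd_hcomp:
  fixes g X :: "('v::finite, 'k::comm_ring_1) mpoly"
  assumes "whomog u w g" and "g ^ e dvd X"
  shows "g ^ e dvd hcomp u c X"
proof -
  obtain b where X: "X = g ^ e * b" using assms(2) by (auto elim: dvdE)
  have "hcomp u c X = g ^ e * hcomp u (c - int e * w) b"
    unfolding X by (rule hcomp_mult_whomog[OF whomog_power[OF assms(1)]])
  then show ?thesis by simp
qed

lemma dvd_whomog_imp_whomog:
  fixes Q g :: "('v::finite, 'k::idom) mpoly"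
  assumes "Q \<noteq> 0" "whomog u D Q" "g dvd Q"
  shows "\<exists>w. whomog u w g"
proof -
  have "g \<noteq> 0" using assms(1,3) by auto
  have "width u Q = 0" using assms(1,2) whomog_iff_width_zero by blast
  then have "width u g = 0"
    using width_dvd[OF assms(3,1), of u] width_nonneg[OF \<open>g \<noteq> 0\<close>, of u] by simp
  then show ?thesis using whomog_iff_width_zero[OF \<open>g \<noteq> 0\<close>] by blast
qed

lemma whomog_imp_graded_Dlog:
  fixes Q :: "('v::finite, 'k::idom) mpoly"
  assumes "Q \<noteq> 0" "whomog u D Q" and uv: "\<forall>i. u i + v i = k"
  shows "graded_der_set u v (Dlog Q)"
  unfolding graded_der_set_def
proof (intro ballI allI)
  fix \<delta> d assume \<delta>: "\<delta> \<in> Dlog Q"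
  show "hcomp_der u v d \<delta> \<in> Dlog Q"
    unfolding Dlog_def Dge_def
  proof (intro CollectI allI impI)
    fix g e assume factor: "irreducible g \<and> g dvd Q \<and> g ^ e dvd Q \<and> \<not> g ^ Suc e dvd Q"
    then obtain w where g: "whomog u w g" using dvd_whomog_imp_whomog assms(1,2) by blast
    have "g ^ e dvd der_apply \<delta> g" using Dlog_dvd \<delta> factor by blast
    then have "g ^ e dvd hcomp u (d - k + w) (der_apply \<delta> g)"
      by (rule dvd_hcomp[OF g])
    then show "g ^ e dvd der_apply (hcomp_der u v d \<delta>) g"
      by (simp add: der_apply_hcomp_der[OF g uv])
  qed
qed

section \<open>Non-homogeneous polynomials: an obstruction to gradedness\<close>

text \<open>A non-quasi-homogeneous polynomial has an irreducible factor of positive width.  Positive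
  weights make every non-unit have positive top degree, which bounds the factorisation.\<close>
lemma exists_irreducible_factor_pos_width:
  fixes Q :: "('v::finite, 'k::field) mpoly"
  assumes u: "\<forall>i. u i > 0"
  shows "Q \<noteq> 0 \<Longrightarrow> width u Q > 0 \<Longrightarrow> \<exists>g. irreducible g \<and> g dvd Q \<and> width u g > 0"
proof (induction "nat (top_deg u Q)" arbitrary: Q rule: less_induct)
  case (less Q)
  show ?case
  proof (cases "irreducible Q")
    case True
    then show ?thesis using less.prems by auto
  next
    case False
    have "\<not> Q dvd 1" using unit_width less.prems by force
    then obtain a b where ab: "Q = a * b" "\<not> a dvd 1" "\<not> b dvd 1"
      using False less.prems(1) by (auto simp: irreducible_def)
    then have nz: "a \<noteq> 0" "b \<noteq> 0" using less.prems(1) by auto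
    have "top_deg u a > 0" "top_deg u b > 0"
      using top_deg_nonpos_imp_unit[OF u] nz ab(2,3) by force+
    then have smaller: "nat (top_deg u a) < nat (top_deg u Q)" "nat (top_deg u b) < nat (top_deg u Q)"
      using ab(1) top_deg_mult[OF nz] by simp_all
    have "width u a > 0 \<or> width u b > 0"
      using less.prems(2) unfolding ab(1) width_mult[OF nz] by linarith
    then obtain g where "irreducible g" "g dvd a \<or> g dvd b" "width u g > 0"
      using less.hyps[OF smaller(1) nz(1)] less.hyps[OF smaller(2) nz(2)] by blast
    then show ?thesis using ab(1) by (metis dvd_mult dvd_mult2)
  qed
qed

text \<open>A factor of positive width divides \<open>Q\<close> to some exact exponent \<open>e \<ge> 1\<close>, since the
  width of \<open>g\<^sup>n\<close> grows linearly in \<open>n\<close>.\<close>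
lemma exact_exponent:
  fixes Q g :: "('v::finite, 'k::idom) mpoly"
  assumes "Q \<noteq> 0" "g dvd Q" "width u g > 0"
  shows "\<exists>e\<ge>1. g ^ e dvd Q \<and> \<not> g ^ Suc e dvd Q"
proof -
  have "g \<noteq> 0" using assms(1,2) by auto
  define N where "N = Suc (nat (width u Q))"
  have "\<not> g ^ N dvd Q"
  proof
    assume "g ^ N dvd Q"
    then have "int N * width u g \<le> width u Q"
      using width_dvd[OF _ assms(1)] width_power[OF \<open>g \<noteq> 0\<close>] by metis
    moreover have "int N \<le> int N * width u g" using assms(3) by (simp add: mult_le_cancel_left1)
    moreover have "width u Q < int N" unfolding N_def using width_nonneg[OF assms(1), of u] by simp
    ultimately show False by simp
  qed
  define n0 where "n0 = (LEAST n. \<not> g ^ n dvd Q)"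
  have n0: "\<not> g ^ n0 dvd Q" unfolding n0_def by (rule LeastI) fact
  have below: "g ^ n dvd Q" if "n < n0" for n using not_less_Least[OF that[unfolded n0_def]] by simp
  have "n0 \<noteq> 0" using n0 by (metis one_dvd power_0)
  moreover have "n0 \<noteq> 1" using n0 assms(2) by (metis power_one_right)
  ultimately obtain e where "n0 = Suc e" "e \<ge> 1" by (cases n0) auto
  then show ?thesis using n0 below[of e] by auto
qed

lemma mult_der_in_Dlog:
  fixes Q :: "('v::finite, 'k::comm_ring_1) mpoly" and a :: "('v, 'k) der"
  shows "(\<lambda>i. Q * a i) \<in> Dlog Q"
  unfolding Dlog_def Dge_def
proof (intro CollectI allI impI)
  fix g e
  assume "irreducible g \<and> g dvd Q \<and> g ^ e dvd Q \<and> \<not> g ^ Suc e dvd Q"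
  then have "g ^ e dvd Q" by blast
  moreover have "Q dvd der_apply (\<lambda>i. Q * a i) g"
    unfolding der_apply_def by (intro dvd_sum) (simp add: mult.assoc)
  ultimately show "g ^ e dvd der_apply (\<lambda>i. Q * a i) g" by (rule dvd_trans)
qed

text \<open>The Euler derivation \<open>E = \<Sum> u\<^sub>i x\<^sub>i \<partial>\<^sub>i\<close>; it multiplies each monomial by its \<open>u\<close>-degree.\<close>
definition euler :: "('v::finite \<Rightarrow> int) \<Rightarrow> ('v, 'k::comm_ring_1) der" where
  "euler u i = Poly_Mapping.single (Poly_Mapping.single i 1) (of_int (u i))"

lemma whomog_euler: "whomog u (u i) (euler u i)"
  using whomog_single[of u "Poly_Mapping.single i 1" "of_int (u i)"] by (simp add: euler_def)

lemma der_apply_mult_right: "der_apply (\<lambda>i. \<delta> i * P) g = P * der_apply \<delta> g"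
  unfolding der_apply_def sum_distrib_left by (intro sum.cong refl) (simp only: mult_ac)

text \<open>For \<open>v = -u\<close> each \<open>euler u i\<close> has degree \<open>0\<close> in \<open>D\<^bsup>(u,v)\<^esup>\<close>, so the degree-\<open>d\<close> component of
  \<open>Q \<cdot> E\<close> is \<open>Q\<^sub>d \<cdot> E\<close>.\<close>
lemma hcomp_der_mult_euler:
  fixes Q :: "('v::finite, 'k::comm_ring_1) mpoly"
  shows "hcomp_der u (\<lambda>i. - u i) d (\<lambda>i. Q * euler u i) = (\<lambda>i. euler u i * hcomp u d Q)"
proof
  fix i
  have "hcomp u (d + u i) (euler u i * Q) = euler u i * hcomp u (d + u i - u i) Q"
    by (rule hcomp_mult_whomog[OF whomog_euler])
  then show "hcomp_der u (\<lambda>i. - u i) d (\<lambda>i. Q * euler u i) i = euler u i * hcomp u d Q"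
    unfolding hcomp_der_def by (simp add: mult.commute[of Q "euler u i"])
qed

lemma lookup_single_mult:
  fixes p :: "('a::cancel_comm_monoid_add) \<Rightarrow>\<^sub>0 'b::comm_semiring_1"
  shows "Poly_Mapping.lookup (Poly_Mapping.single a c * p) k =
    (if \<exists>m. k = a + m then c * Poly_Mapping.lookup p (THE m. k = a + m) else 0)"
proof -
  have "Poly_Mapping.lookup (Poly_Mapping.single a c * p) k =
      c * (\<Sum>q. Poly_Mapping.lookup p q when k = a + q)"
    by (simp add: lookup_mult lookup_single when_mult)
  also have "\<dots> = (if \<exists>m. k = a + m then c * Poly_Mapping.lookup p (THE m. k = a + m) else 0)"
  proof (cases "\<exists>m. k = a + m")
    case True
    then obtain m where m: "k = a + m" by blast
    then have "(\<Sum>q. Poly_Mapping.lookup p q when k = a + q) = (\<Sum>q. Poly_Mapping.lookup p q when q = m)"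
      by (intro Sum_any.cong) (auto simp: when_def)
    moreover have "(THE m. k = a + m) = m" using m by auto
    ultimately show ?thesis using True by simp
  qed (simp add: when_def)
  finally show ?thesis .
qed

lemma lookup_single_mult_add:
  fixes p :: "('a::cancel_comm_monoid_add) \<Rightarrow>\<^sub>0 'b::comm_semiring_1"
  shows "Poly_Mapping.lookup (Poly_Mapping.single a c * p) (a + m) = c * Poly_Mapping.lookup p m"
  by (subst lookup_single_mult) auto

lemma lookup_euler_pdiff:
  fixes g :: "('v::finite, 'k::comm_ring_1) mpoly"
  shows "Poly_Mapping.lookup (euler u i * pdiff i g) m
      = of_int (u i * int (Poly_Mapping.lookup m i)) * Poly_Mapping.lookup g m"
proof (cases "Poly_Mapping.lookup m i = 0")
  case True
  then have "\<not> (\<exists>m'. m = Poly_Mapping.single i 1 + m')"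
    by (auto simp: lookup_add)
  then show ?thesis using True by (simp add: euler_def lookup_single_mult)
next
  case False
  define m' where "m' = m - Poly_Mapping.single i 1"
  have m: "m = Poly_Mapping.single i 1 + m'"
    by (rule poly_mapping_eqI) (use False in \<open>auto simp: m'_def lookup_add lookup_minus lookup_single when_def\<close>)
  have "Poly_Mapping.lookup (euler u i * pdiff i g) m = of_int (u i) * Poly_Mapping.lookup (pdiff i g) m'"
    unfolding euler_def by (subst m) (rule lookup_single_mult_add)
  also have "\<dots> = of_int (u i) * (of_nat (Poly_Mapping.lookup m i) * Poly_Mapping.lookup g m)"
    using m by (simp add: lookup_pdiff lookup_add add.commute)
  finally show ?thesis by simp
qed

lemma lookup_der_apply_euler:
  "Poly_Mapping.lookup (der_apply (euler u) g) m = of_int (wdeg u m) * Poly_Mapping.lookup g m"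
  by (simp add: der_apply_def lookup_sum lookup_euler_pdiff wdeg_def sum_distrib_right)

text \<open>In characteristic zero, \<open>E(g) - T g\<close> (with \<open>T\<close> the top degree of \<open>g\<close>) kills the top
  component of \<open>g\<close> but keeps the bottom one; so if \<open>g\<close> has positive width, the result is
  nonzero of strictly smaller width.\<close>
lemma euler_defect_width:
  fixes g :: "('v::finite, 'k::field_char_0) mpoly" and u :: "'v \<Rightarrow> int"
  defines "F \<equiv> der_apply (euler u) g - of_int (top_deg u g) * g"
  assumes "g \<noteq> 0" "width u g > 0"
  shows "F \<noteq> 0 \<and> width u F < width u g"
proof -
  let ?T = "top_deg u g"
  have "Poly_Mapping.lookup F m = of_int (wdeg u m - ?T) * Poly_Mapping.lookup g m" for m
    using lookup_single_mult_add[of 0 "of_int ?T" g m]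
    by (simp add: F_def lookup_minus lookup_der_apply_euler algebra_simps)
  then have keysF: "m \<in> Poly_Mapping.keys F \<longleftrightarrow> m \<in> Poly_Mapping.keys g \<and> wdeg u m \<noteq> ?T" for m
    by (auto simp: in_keys_iff)
  have "bot_deg u g < ?T" using assms(3) by (simp add: width_def)
  then have "bot_deg u g \<in> wdeg u ` Poly_Mapping.keys F"
    using bot_deg_in[OF assms(2), of u] keysF by fastforce
  then have "F \<noteq> 0" by auto
  have degs: "wdeg u ` Poly_Mapping.keys F \<subseteq> wdeg u ` Poly_Mapping.keys g - {?T}"
    using keysF by auto
  then have "top_deg u F \<in> wdeg u ` Poly_Mapping.keys g" "top_deg u F \<noteq> ?T"
    using top_deg_in[OF \<open>F \<noteq> 0\<close>, of u] by auto
  then have "top_deg u F < ?T" using top_deg_ge[of "top_deg u F" u g] by simp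
  moreover have "bot_deg u g \<le> bot_deg u F"
    using degs bot_deg_in[OF \<open>F \<noteq> 0\<close>, of u] bot_deg_le by blast
  ultimately show ?thesis using \<open>F \<noteq> 0\<close> by (simp add: width_def)
qed

text \<open>The top component of \<open>Q \<cdot> E \<in> D(Q)\<close> is \<open>Q\<^sub>t\<^sub>o\<^sub>p \<cdot> E\<close>, and a factor \<open>g\<close>
  of positive width would divide \<open>Q\<^sub>t\<^sub>o\<^sub>p \<cdot> (E(g) - T g)\<close>, a polynomial of smaller width.\<close>
lemma graded_Dlog_imp_whomog:
  fixes Q :: "('v::finite, 'k::field_char_0) mpoly"
  assumes Q: "Q \<noteq> 0" and u: "\<forall>i. u i > 0"
    and graded: "graded_der_set u (\<lambda>i. - u i) (Dlog Q)"
  shows "\<exists>d. whomog u d Q"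
proof (rule ccontr)
  assume "\<not> (\<exists>d. whomog u d Q)"
  then have "width u Q > 0"
    using whomog_iff_width_zero[OF Q] width_nonneg[OF Q, of u] by simp
  then obtain g where g: "irreducible g" "g dvd Q" "width u g > 0"
    using exists_irreducible_factor_pos_width[OF u Q] by blast
  obtain e where e: "e \<ge> 1" "g ^ e dvd Q" "\<not> g ^ Suc e dvd Q"
    using exact_exponent[OF Q g(2,3)] by blast
  define Qtop where "Qtop = hcomp u (top_deg u Q) Q"
  have "Qtop \<noteq> 0" unfolding Qtop_def using hcomp_ne_zero_iff top_deg_in[OF Q] by blast
  have "width u Qtop = 0"
    using whomog_iff_width_zero[OF \<open>Qtop \<noteq> 0\<close>] whomog_hcomp Qtop_def by blast
  have "(\<lambda>i. euler u i * Qtop) \<in> Dlog Q"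
    using graded mult_der_in_Dlog hcomp_der_mult_euler[of u "top_deg u Q" Q]
    unfolding graded_der_set_def Qtop_def by metis
  then have "g ^ e dvd der_apply (\<lambda>i. euler u i * Qtop) g" by (rule Dlog_dvd[OF _ g(1,2) e(2,3)])
  then have "g ^ e dvd Qtop * der_apply (euler u) g" by (simp only: der_apply_mult_right)
  moreover have "g dvd g ^ e" using e(1) by simp
  ultimately have "g dvd Qtop * der_apply (euler u) g" using dvd_trans by blast
  define F where "F = der_apply (euler u) g - of_int (top_deg u g) * g"
  have "g dvd Qtop * F"
    unfolding F_def right_diff_distrib
    by (rule dvd_diff) (fact, simp)
  have "g \<noteq> 0" using g(1) by auto
  have "F \<noteq> 0 \<and> width u F < width u g"
    unfolding F_def by (rule euler_defect_width[OF \<open>g \<noteq> 0\<close> g(3)])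
  then obtain "F \<noteq> 0" "width u F < width u g" by blast
  then have "width u (Qtop * F) < width u g"
    using width_mult[OF \<open>Qtop \<noteq> 0\<close>] \<open>width u Qtop = 0\<close> by simp
  moreover have "width u g \<le> width u (Qtop * F)"
    using width_dvd[OF \<open>g dvd Qtop * F\<close> mpoly_mult_nonzero[OF \<open>Qtop \<noteq> 0\<close> \<open>F \<noteq> 0\<close>]] .
  ultimately show False by simp
qed

theorem mainTheorem5:
  fixes Q :: "('v::finite, 'k::field_char_0) mpoly"
    and u :: "'v \<Rightarrow> int"
  assumes "Q \<noteq> 0"
    and "\<forall>i. u i > 0"
  shows "(\<exists>d. whomog u d Q) \<longleftrightarrow>
         (\<forall>v :: 'v \<Rightarrow> int. (\<exists>k. \<forall>i. u i + v i = k) \<longrightarrow> graded_der_set u v (Dlog Q))"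
proof
  assume "\<exists>d. whomog u d Q"
  then show "\<forall>v. (\<exists>k. \<forall>i. u i + v i = k) \<longrightarrow> graded_der_set u v (Dlog Q)"
    using whomog_imp_graded_Dlog[OF assms(1)] by blast
next
  assume "\<forall>v. (\<exists>k. \<forall>i. u i + v i = k) \<longrightarrow> graded_der_set u v (Dlog Q)"
  then have "graded_der_set u (\<lambda>i. - u i) (Dlog Q)" by force
  then show "\<exists>d. whomog u d Q" by (rule graded_Dlog_imp_whomog[OF assms])
qed
end
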